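(* For every ring grooming instance with uniform traffic ($d_{jk}=d\ge 1$ for all $j\ne k$), Algorithm A produces a feasible routing whose number of ADMs is at most $12\sqrt2\, m$, where $m$ is the minimum number of ADMs for the instance.
   Context: Ring grooming. An instance consists of integers $n\ge 2$ (ring size) and $c\ge 1$ (capacity), and a finite list $L$ of unordered pairs $\{j,k\}$ with $j\ne k$, $j,k\in\{1,\dots,n\}$ (repetitions allowed); these are the traffic demands. Let $d_{jk}=d_{kj}$ be the number of times $\{j,k\}$ occurs in $L$. Let $C_n$ be the cycle graph on vertices $1,\dots,n$ in cyclic order. A solution uses some finite number of "rings", each a copy of $C_n$ with capacity $c$ on every edge. A routing specifies, for every ring $i$ and every pair $j<k$, nonnegative integers $t^0_{ijk},t^1_{ijk}$ (amounts of $\{j,k\}$-traffic on ring $i$ along each of the two arcs of $C_n$ between $j$ and $k$); it is feasible if $\sum_i(t^0_{ijk}+t^1_{ijk})=d_{jk}$ for all $j<k$ and on every ring every edge carries total traffic at most $c$. Ring $i$ needs an ADM at vertex $j$ iff some traffic with endpoint $j$ is routed on ring $i$; the cost is the total number of ADMs, and $m$ is the minimum cost. Algorithm A (uniform traffic $d$, $f=d/(2c)$). If $f\ge 1$: for each pair $j<k$, use $\lceil f\rceil$ rings on which only $\{j,k\}$-traffic is routed (so each has ADMs only at $j$ and $k$), splitting the $d$ units among them feasibly. If $f<1$: let $M=\lfloor\sqrt{2/f}\rfloor$ if $2\le\lfloor\sqrt{2/f}\rfloor\le n$, $M=2$ if $\lfloor\sqrt{2/f}\rfloor<2$, and $M=n$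 if $\lfloor\sqrt{2/f}\rfloor>n$. Let $\mu=\lfloor M/2\rfloor$ and let $F$ be a family of $\lceil n/\mu\rceil$ subsets of $\{1,\dots,n\}$, each of size $\mu$, whose union is $\{1,\dots,n\}$. For each unordered pair of distinct members of $F$, form a block equal to their union, enlarged if necessary by arbitrary further vertices to have exactly $M$ elements (if $F$ has a single member, take the single block $\{1,\dots,n\}$); discard duplicate blocks. Every pair $\{j,k\}$ then lies in some block. Process the blocks in turn: for each block, create a ring and route on it all demands between vertices of the block that have not been routed on a previous ring, using, for each such pair, $\lfloor d/2\rfloor$ units on the longer arc and $\lceil d/2\rceil$ units on the shorter arc (ties broken arbitrarily). Finally discard ADMs at which no traffic terminates. *)

theory Defs
  imports Complex_Main
begin

(* Vertices of C_n are 1..n.  Edge e (1 <= e <= n) joins e and e+1, edge n joins n and 1.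
   For a pair j < k, arc "False" (t^0) is the arc j, j+1, ..., k, i.e. edges {j..<k};
   arc "True" (t^1) is the complementary arc, i.e. edges {1..n} - {j..<k}.
   A routing with R rings is t :: ring => j => k => arc => amount, meaningful for
   rings i < R and pairs 1 <= j < k <= n.  Demands are given by D j k (j < k). *)

definition pairs :: "nat \<Rightarrow> (nat \<times> nat) set" where
  "pairs n = {(j, k). 1 \<le> j \<and> j < k \<and> k \<le> n}"

definition arc_edges :: "nat \<Rightarrow> nat \<Rightarrow> nat \<Rightarrow> bool \<Rightarrow> nat set" where
  "arc_edges n j k b = (if b then {1..n} - {j..<k} else {j..<k})"

definition load :: "nat \<Rightarrow> (nat \<Rightarrow> nat \<Rightarrow> nat \<Rightarrow> bool \<Rightarrow> nat) \<Rightarrow> nat \<Rightarrow> nat \<Rightarrow> nat" where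
  "load n t i e =
     (\<Sum>(j, k)\<in>pairs n. (if e \<in> arc_edges n j k False then t i j k False else 0)
                       + (if e \<in> arc_edges n j k True then t i j k True else 0))"

definition feasible :: "nat \<Rightarrow> nat \<Rightarrow> (nat \<Rightarrow> nat \<Rightarrow> nat) \<Rightarrow> nat
    \<Rightarrow> (nat \<Rightarrow> nat \<Rightarrow> nat \<Rightarrow> bool \<Rightarrow> nat) \<Rightarrow> bool" where
  "feasible n c D R t \<longleftrightarrow>
     (\<forall>(j, k)\<in>pairs n. (\<Sum>i<R. t i j k False + t i j k True) = D j k) \<and>
     (\<forall>i<R. \<forall>e\<in>{1..n}. load n t i e \<le> c)"

definition has_adm :: "nat \<Rightarrow> (nat \<Rightarrow> nat \<Rightarrow> nat \<Rightarrow> bool \<Rightarrow> nat) \<Rightarrow> nat \<Rightarrow> nat \<Rightarrow> bool" where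
  "has_adm n t i j \<longleftrightarrow>
     (\<exists>k\<in>{1..n}. k \<noteq> j \<and> t i (min j k) (max j k) False + t i (min j k) (max j k) True > 0)"

definition cost :: "nat \<Rightarrow> nat \<Rightarrow> (nat \<Rightarrow> nat \<Rightarrow> nat \<Rightarrow> bool \<Rightarrow> nat) \<Rightarrow> nat" where
  "cost n R t = (\<Sum>i<R. card {j\<in>{1..n}. has_adm n t i j})"

definition min_cost :: "nat \<Rightarrow> nat \<Rightarrow> (nat \<Rightarrow> nat \<Rightarrow> nat) \<Rightarrow> nat" where
  "min_cost n c D = (LEAST x. \<exists>R t. feasible n c D R t \<and> cost n R t = x)"

definition fval :: "nat \<Rightarrow> nat \<Rightarrow> real" where
  "fval c d = real d / (2 * real c)"

definition blocksize :: "nat \<Rightarrow> nat \<Rightarrow> nat \<Rightarrow> nat" where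
  "blocksize n c d =
     (let s = nat \<lfloor>sqrt (2 / fval c d)\<rfloor> in
      if s < 2 then 2 else if s > n then n else s)"

definition algA_large :: "nat \<Rightarrow> nat \<Rightarrow> nat \<Rightarrow> nat
    \<Rightarrow> (nat \<Rightarrow> nat \<Rightarrow> nat \<Rightarrow> bool \<Rightarrow> nat) \<Rightarrow> bool" where
  "algA_large n c d R t \<longleftrightarrow>
     (\<exists>g :: nat \<Rightarrow> nat \<times> nat.
        (\<forall>i<R. g i \<in> pairs n) \<and>
        (\<forall>p\<in>pairs n. card {i. i < R \<and> g i = p} = nat \<lceil>fval c d\<rceil>) \<and>
        (\<forall>i<R. \<forall>p\<in>pairs n. p \<noteq> g i \<longrightarrow>
            t i (fst p) (snd p) False = 0 \<and> t i (fst p) (snd p) True = 0) \<and>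
        feasible n c (\<lambda>_ _. d) R t)"

(* amounts a (arc False, length k-j) and b (arc True, length n-(k-j)):
   floor(d/2) on the longer arc, ceil(d/2) on the shorter arc, ties arbitrary *)
definition split_ok :: "nat \<Rightarrow> nat \<Rightarrow> nat \<Rightarrow> nat \<Rightarrow> nat \<Rightarrow> nat \<Rightarrow> bool" where
  "split_ok n d j k a b \<longleftrightarrow>
     (k - j < n - (k - j) \<longrightarrow> a = (d + 1) div 2 \<and> b = d div 2) \<and>
     (k - j > n - (k - j) \<longrightarrow> a = d div 2 \<and> b = (d + 1) div 2) \<and>
     (k - j = n - (k - j) \<longrightarrow>
        (a = (d + 1) div 2 \<and> b = d div 2) \<or> (a = d div 2 \<and> b = (d + 1) div 2))"

definition algA_small :: "nat \<Rightarrow> nat \<Rightarrow> nat \<Rightarrow> nat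
    \<Rightarrow> (nat \<Rightarrow> nat \<Rightarrow> nat \<Rightarrow> bool \<Rightarrow> nat) \<Rightarrow> bool" where
  "algA_small n c d R t \<longleftrightarrow>
     (let M = blocksize n c d; \<mu> = M div 2 in
      \<exists>(F :: nat set set) (blk :: nat set set \<Rightarrow> nat set) (bs :: nat set list).
        (\<forall>A\<in>F. A \<subseteq> {1..n} \<and> card A = \<mu>) \<and>
        finite F \<and> card F = nat \<lceil>real n / real \<mu>\<rceil> \<and>
        \<Union>F = {1..n} \<and>
        (\<forall>A\<in>F. \<forall>B\<in>F. A \<noteq> B \<longrightarrow>
            A \<union> B \<subseteq> blk {A, B} \<and> blk {A, B} \<subseteq> {1..n} \<and> card (blk {A, B}) = M) \<and>
        distinct bs \<and>
        set bs = (if card F = 1 then {{1..n}}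
                  else {blk {A, B} | A B. A \<in> F \<and> B \<in> F \<and> A \<noteq> B}) \<and>
        R = length bs \<and>
        (\<forall>i<R. \<forall>(j, k)\<in>pairs n.
            (if j \<in> bs ! i \<and> k \<in> bs ! i \<and> \<not> (\<exists>i'<i. j \<in> bs ! i' \<and> k \<in> bs ! i')
             then split_ok n d j k (t i j k False) (t i j k True)
             else t i j k False = 0 \<and> t i j k True = 0)))"

definition algA :: "nat \<Rightarrow> nat \<Rightarrow> nat \<Rightarrow> nat
    \<Rightarrow> (nat \<Rightarrow> nat \<Rightarrow> nat \<Rightarrow> bool \<Rightarrow> nat) \<Rightarrow> bool" where
  "algA n c d R t \<longleftrightarrow>
     (if fval c d \<ge> 1 then algA_large n c d R t else algA_small n c d R t)"

end

theory Submission
  imports Defs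
begin

(* Take a feasible routing and a ring whose ADMs form the set S, |S| = K, and
   pair each vertex s in S with the edge s leaving it clockwise.  The loads of these K edges add up
   to at most K c, and this sum counts every unit of traffic once for each such edge on its arc.
   From a fixed vertex of S at most h arcs in each direction cross at most h of these edges, so at
   most 2 h K pair-arc combinations do, each carrying at most d units.  Hence (h + 1) times the
   traffic of the ring is at most K (2 d h (h + 1) + c); summing over the rings gives
   (h + 1) d P <= m (2 d h (h + 1) + c) for every h, where P = n (n - 1) / 2.  Also m >= n.

   If f >= 1, each of the ceil f * P dedicated rings has two ADMs and c ceil f <= d,
   so the cost is at most 2 d P / c <= 2 m (take h = 0).  If f < 1, a block ring has at most M ADMs,
   and its load stays within c: the floor (d / 2) units of the M (M - 1) / 2 pairs of the block
   cross an edge at most once each, and the remaining unit (for odd d) takes the shorter arc, which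
   passes a given edge only for pairs separated by the half ring ahead of that edge, at most M^2 / 4
   of them.  There are at most (q choose 2) blocks, q = ceil (n / mu).  Either M = n and the single
   ring costs n <= m, or the maximality of M gives c <= d (mu + 1)^2, and the lower bound at
   h = mu - 1 yields m >= mu P / (3 mu^2 + 1), whence (q choose 2) (2 mu + 1) <= 12 m.  So the
   algorithm is even within a factor 12 of the optimum. *)

section \<open>Pairs and ADMs\<close>

lemma finite_pairs: "finite (pairs n)"
  by (rule finite_subset[of _ "{1..n} \<times> {1..n}"]) (auto simp: pairs_def)

lemma card_ordered_pairs:
  fixes B :: "nat set"
  assumes "finite B"
  shows "2 * card {(j, k). j \<in> B \<and> k \<in> B \<and> j < k} + card B = card B * card B"
proof -
  let ?U = "{(j, k). j \<in> B \<and> k \<in> B \<and> j < k}"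
  let ?L = "{(j, k). j \<in> B \<and> k \<in> B \<and> k < j}"
  let ?D = "(\<lambda>x. (x, x)) ` B"
  have "B \<times> B = ?U \<union> ?L \<union> ?D" by auto
  moreover have "finite ?U" "finite ?L"
    using assms by (auto intro: finite_subset[of _ "B \<times> B"])
  moreover have "?L = (\<lambda>(j, k). (k, j)) ` ?U" by auto
  moreover have "card ((\<lambda>(j, k). (k, j)) ` ?U) = card ?U"
    by (rule card_image) (auto simp: inj_on_def)
  moreover have "card ?D = card B" by (rule card_image) (auto simp: inj_on_def)
  moreover have "(?U \<union> ?L) \<inter> ?D = {}" "?U \<inter> ?L = {}" by auto
  ultimately have "card (B \<times> B) = card ?U + card ?U + card B"
    using assms by (simp add: card_Un_disjoint)
  then show ?thesis by (simp add: card_cartesian_product)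
qed

lemma card_pairs: "2 * card (pairs n) + n = n * n"
proof -
  have "pairs n = {(j, k). j \<in> {1..n} \<and> k \<in> {1..n} \<and> j < k}"
    by (auto simp: pairs_def)
  then show ?thesis using card_ordered_pairs[of "{1..n}"] by simp
qed

lemma sum_pairs_indicator:
  "(\<Sum>(j, k)\<in>pairs n. if P j k then (1::nat) else 0) = card {(j, k)\<in>pairs n. P j k}"
proof -
  have "(\<Sum>(j, k)\<in>pairs n. if P j k then (1::nat) else 0) = card (pairs n \<inter> {x. case_prod P x})"
    using finite_pairs by (simp add: case_prod_beta sum.If_cases)
  also have "pairs n \<inter> {x. case_prod P x} = {(j, k)\<in>pairs n. P j k}" by auto
  finally show ?thesis .
qed

definition adm_vertices :: "nat \<Rightarrow> (nat \<Rightarrow> nat \<Rightarrow> nat \<Rightarrow> bool \<Rightarrow> nat) \<Rightarrow> nat \<Rightarrow> nat set" where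
  "adm_vertices n t i = {j\<in>{1..n}. has_adm n t i j}"

lemma adm_vertices_subset: "adm_vertices n t i \<subseteq> {1..n}"
  by (auto simp: adm_vertices_def)

lemma finite_adm_vertices: "finite (adm_vertices n t i)"
  by (rule finite_subset[OF adm_vertices_subset]) simp

lemma cost_eq_sum_card_adm_vertices: "cost n R t = (\<Sum>i<R. card (adm_vertices n t i))"
  by (simp add: cost_def adm_vertices_def)

lemma endpoints_in_adm_vertices:
  assumes "(j, k) \<in> pairs n" and "t i j k b > 0"
  shows "j \<in> adm_vertices n t i" and "k \<in> adm_vertices n t i"
proof -
  from assms(1) have jk: "1 \<le> j" "j < k" "k \<le> n" by (auto simp: pairs_def)
  have pos: "t i j k False + t i j k True > 0" using assms(2) by (cases b) auto
  have "has_adm n t i j" unfolding has_adm_def using jk pos by (intro bexI[of _ k]) auto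
  moreover have "has_adm n t i k" unfolding has_adm_def using jk pos by (intro bexI[of _ j]) auto
  ultimately show "j \<in> adm_vertices n t i" "k \<in> adm_vertices n t i"
    using jk by (auto simp: adm_vertices_def)
qed

lemma adm_vertices_subsetI:
  assumes "\<And>j k. (j, k) \<in> pairs n \<Longrightarrow> \<not> (j \<in> B \<and> k \<in> B) \<Longrightarrow> t i j k False = 0 \<and> t i j k True = 0"
  shows "adm_vertices n t i \<subseteq> B"
proof
  fix j assume "j \<in> adm_vertices n t i"
  then obtain k where j: "j \<in> {1..n}" and k: "k \<in> {1..n}" "k \<noteq> j"
    and pos: "t i (min j k) (max j k) False + t i (min j k) (max j k) True > 0"
    by (auto simp: adm_vertices_def has_adm_def)
  have "(min j k, max j k) \<in> pairs n" using j k by (auto simp: pairs_def)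
  with pos assms have "min j k \<in> B \<and> max j k \<in> B" by fastforce
  then show "j \<in> B" by (cases "j \<le> k") (auto simp: min_def max_def)
qed

lemma cost_le_mult_block_size:
  assumes "\<And>i j k. i < R \<Longrightarrow> (j, k) \<in> pairs n \<Longrightarrow> \<not> (j \<in> B i \<and> k \<in> B i) \<Longrightarrow>
      t i j k False = 0 \<and> t i j k True = 0"
    and "\<And>i. i < R \<Longrightarrow> finite (B i) \<and> card (B i) \<le> K"
  shows "cost n R t \<le> R * K"
proof -
  have "card (adm_vertices n t i) \<le> K" if "i < R" for i
    using card_mono[OF _ adm_vertices_subsetI[of n "B i" t i]] assms that by force
  then have "(\<Sum>i<R. card (adm_vertices n t i)) \<le> (\<Sum>i<R. K)" by (intro sum_mono) auto
  then show ?thesis by (simp add: cost_eq_sum_card_adm_vertices)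
qed

section \<open>The lower bound\<close>

lemma traffic_le_demand:
  assumes "feasible n c D R t" and "(j, k) \<in> pairs n" and "i < R"
  shows "t i j k b \<le> D j k"
proof -
  have "t i j k False + t i j k True \<le> (\<Sum>i<R. t i j k False + t i j k True)"
    using assms(3) by (intro member_le_sum) auto
  also have "\<dots> = D j k" using assms(1,2) by (auto simp: feasible_def)
  finally show ?thesis by (cases b) auto
qed

lemma sum_load_eq:
  assumes "S \<subseteq> {1..n}"
  shows "(\<Sum>e\<in>S. load n t i e) =
    (\<Sum>(j, k)\<in>pairs n. t i j k False * card (S \<inter> arc_edges n j k False)
                     + t i j k True * card (S \<inter> arc_edges n j k True))"
proof -
  have fS: "finite S" using assms finite_subset by blast
  have "(\<Sum>e\<in>S. load n t i e) = (\<Sum>(j, k)\<in>pairs n. \<Sum>e\<in>S.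
      (if e \<in> arc_edges n j k False then t i j k False else 0)
      + (if e \<in> arc_edges n j k True then t i j k True else 0))"
    unfolding load_def by (subst sum.swap) (simp add: case_prod_beta)
  also have "\<dots> = (\<Sum>(j, k)\<in>pairs n. t i j k False * card (S \<inter> arc_edges n j k False)
                     + t i j k True * card (S \<inter> arc_edges n j k True))"
    using fS by (simp add: sum.distrib sum.If_cases Int_def mult.commute)
  finally show ?thesis .
qed

lemma card_le_mult_card_fibres:
  assumes "finite S" and "P \<subseteq> Sigma S B" and "\<And>j. j \<in> S \<Longrightarrow> finite (B j) \<and> card (B j) \<le> h"
  shows "card P \<le> h * card S"
proof -
  have "card P \<le> card (Sigma S B)" using assms by (intro card_mono) auto
  also have "\<dots> = (\<Sum>j\<in>S. card (B j))" using assms by (intro card_SigmaI) auto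
  also have "\<dots> \<le> (\<Sum>j\<in>S. h)" using assms(3) by (intro sum_mono) auto
  finally show ?thesis by (simp add: mult.commute)
qed

lemma card_few_between_le:
  fixes S :: "nat set"
  assumes "finite S" and "j \<in> S"
  shows "card {k\<in>S. j < k \<and> card (S \<inter> {j..<k}) \<le> h} \<le> h"
proof -
  let ?A = "{k\<in>S. j < k \<and> card (S \<inter> {j..<k}) \<le> h}"
  let ?g = "\<lambda>k. card (S \<inter> {j..<k})"
  have "strict_mono_on ?A ?g"
  proof (rule strict_mono_onI)
    fix r s assume "r \<in> ?A" "s \<in> ?A" "r < s"
    then have "S \<inter> {j..<r} \<subset> S \<inter> {j..<s}" by auto
    then show "?g r < ?g s" using assms(1) by (intro psubset_card_mono) auto
  qed
  moreover have "?g ` ?A \<subseteq> {1..h}"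
    using assms by (force simp: Suc_le_eq card_gt_0_iff)
  ultimately have "card ?A \<le> card {1..h}"
    by (intro card_inj_on_le strict_mono_on_imp_inj_on) auto
  then show ?thesis by simp
qed

lemma card_few_outside_le:
  fixes S :: "nat set"
  assumes "finite S" and "k \<in> S"
  shows "card {j\<in>S. j < k \<and> card (S - {j..<k}) \<le> h} \<le> h"
proof -
  let ?A = "{j\<in>S. j < k \<and> card (S - {j..<k}) \<le> h}"
  let ?g = "\<lambda>j. card (S - {j..<k})"
  have "strict_mono_on ?A ?g"
  proof (rule strict_mono_onI)
    fix r s assume "r \<in> ?A" "s \<in> ?A" "r < s"
    then have "S - {r..<k} \<subseteq> S - {s..<k}" "r \<in> S - {s..<k}" "r \<notin> S - {r..<k}" by auto
    then have "S - {r..<k} \<subset> S - {s..<k}" by blast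
    then show "?g r < ?g s" using assms(1) by (intro psubset_card_mono) auto
  qed
  moreover have "?g ` ?A \<subseteq> {1..h}"
    using assms by (force simp: Suc_le_eq card_gt_0_iff)
  ultimately have "card ?A \<le> card {1..h}"
    by (intro card_inj_on_le strict_mono_on_imp_inj_on) auto
  then show ?thesis by simp
qed

lemma card_short_arcs_le:
  "card {(j, k)\<in>pairs n. 0 < t i j k b \<and> card (adm_vertices n t i \<inter> arc_edges n j k b) \<le> h}
     \<le> h * card (adm_vertices n t i)"
proof -
  let ?S = "adm_vertices n t i"
  let ?P = "{(j, k)\<in>pairs n. 0 < t i j k b \<and> card (?S \<inter> arc_edges n j k b) \<le> h}"
  have fS: "finite ?S" by (rule finite_adm_vertices)
  show ?thesis
  proof (cases b)
    case False
    then have arc: "?S \<inter> arc_edges n j k b = ?S \<inter> {j..<k}" for j k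
      by (simp add: arc_edges_def)
    have "?P \<subseteq> Sigma ?S (\<lambda>j. {k\<in>?S. j < k \<and> card (?S \<inter> {j..<k}) \<le> h})"
      using endpoints_in_adm_vertices[of _ _ n t i b] by (auto simp: arc pairs_def)
    then show ?thesis
      using fS card_few_between_le[OF fS] by (intro card_le_mult_card_fibres) auto
  next
    case True
    then have arc: "?S \<inter> arc_edges n j k b = ?S - {j..<k}" for j k
      using adm_vertices_subset[of n t i] by (auto simp: arc_edges_def)
    have "prod.swap ` ?P \<subseteq> Sigma ?S (\<lambda>k. {j\<in>?S. j < k \<and> card (?S - {j..<k}) \<le> h})"
      using endpoints_in_adm_vertices[of _ _ n t i b] by (auto simp: arc pairs_def)
    then have "card (prod.swap ` ?P) \<le> h * card ?S"
      using fS card_few_outside_le[OF fS] by (intro card_le_mult_card_fibres) auto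
    then show ?thesis by (simp add: card_image)
  qed
qed

lemma weighted_traffic_le:
  fixes x d a h :: nat
  assumes "x \<le> d"
  shows "(h + 1) * x \<le> (h + 1) * d * (if 0 < x \<and> a \<le> h then 1 else 0) + x * a"
proof (cases "0 < x \<and> a \<le> h")
  case True
  have "(h + 1) * x \<le> (h + 1) * d" using assms by (rule mult_left_mono) simp
  then show ?thesis using True by simp
next
  case False
  then have "x = 0 \<or> h + 1 \<le> a" by auto
  then have "(h + 1) * x \<le> a * x" using mult_le_mono1[of "h + 1" a x] by auto
  then show ?thesis by (simp add: mult.commute)
qed

lemma ring_traffic_le:
  assumes feas: "feasible n c (\<lambda>_ _. d) R t" and "i < R"
  shows "(h + 1) * (\<Sum>(j, k)\<in>pairs n. t i j k False + t i j k True)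
           \<le> card (adm_vertices n t i) * (2 * d * h * (h + 1) + c)"
proof -
  let ?S = "adm_vertices n t i"
  let ?w = "\<lambda>b j k. card (?S \<inter> arc_edges n j k b)"
  let ?short = "\<lambda>b j k. 0 < t i j k b \<and> ?w b j k \<le> h"
  let ?ind = "\<lambda>b j k. if ?short b j k then 1 else (0::nat)"
  have per_pair: "(h + 1) * (t i j k False + t i j k True)
      \<le> (h + 1) * d * ?ind False j k + (h + 1) * d * ?ind True j k
        + (t i j k False * ?w False j k + t i j k True * ?w True j k)"
    if "(j, k) \<in> pairs n" for j k
    using weighted_traffic_le[OF traffic_le_demand[OF feas that \<open>i < R\<close>, of False],
        where a = "?w False j k" and h = h]
      weighted_traffic_le[OF traffic_le_demand[OF feas that \<open>i < R\<close>, of True],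
        where a = "?w True j k" and h = h]
    by (simp add: algebra_simps)
  have "(h + 1) * (\<Sum>(j, k)\<in>pairs n. t i j k False + t i j k True)
      = (\<Sum>(j, k)\<in>pairs n. (h + 1) * (t i j k False + t i j k True))"
    by (simp add: sum_distrib_left case_prod_beta)
  also have "\<dots> \<le> (\<Sum>(j, k)\<in>pairs n. (h + 1) * d * ?ind False j k + (h + 1) * d * ?ind True j k
        + (t i j k False * ?w False j k + t i j k True * ?w True j k))"
    using per_pair by (intro sum_mono) auto
  also have "\<dots> = (h + 1) * d * (card {(j, k)\<in>pairs n. ?short False j k}
        + card {(j, k)\<in>pairs n. ?short True j k}) + (\<Sum>e\<in>?S. load n t i e)"
    unfolding sum_load_eq[OF adm_vertices_subset] sum_pairs_indicator[symmetric]
    by (simp add: split_def sum.distrib sum_distrib_left distrib_left)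
  also have "\<dots> \<le> (h + 1) * d * (h * card ?S + h * card ?S) + card ?S * c"
  proof (rule add_mono)
    show "(h + 1) * d * (card {(j, k)\<in>pairs n. ?short False j k}
        + card {(j, k)\<in>pairs n. ?short True j k}) \<le> (h + 1) * d * (h * card ?S + h * card ?S)"
      using card_short_arcs_le[of n t i False h] card_short_arcs_le[of n t i True h]
      by (intro mult_left_mono add_mono) auto
    have "(\<Sum>e\<in>?S. load n t i e) \<le> (\<Sum>e\<in>?S. c)"
      using feas \<open>i < R\<close> adm_vertices_subset[of n t i] by (intro sum_mono) (auto simp: feasible_def)
    then show "(\<Sum>e\<in>?S. load n t i e) \<le> card ?S * c" by simp
  qed
  also have "\<dots> = card ?S * (2 * d * h * (h + 1) + c)" by (simp add: algebra_simps)
  finally show ?thesis .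
qed

lemma cost_lower_bound:
  assumes feas: "feasible n c (\<lambda>_ _. d) R t"
  shows "(h + 1) * (d * card (pairs n)) \<le> cost n R t * (2 * d * h * (h + 1) + c)"
proof -
  have "d * card (pairs n) = (\<Sum>(j, k)\<in>pairs n. \<Sum>i<R. t i j k False + t i j k True)"
    using feas by (simp add: feasible_def split_def)
  also have "\<dots> = (\<Sum>i<R. \<Sum>(j, k)\<in>pairs n. t i j k False + t i j k True)"
    by (subst sum.swap) (simp add: case_prod_beta)
  finally have "(h + 1) * (d * card (pairs n))
      = (\<Sum>i<R. (h + 1) * (\<Sum>(j, k)\<in>pairs n. t i j k False + t i j k True))"
    by (simp add: sum_distrib_left)
  also have "\<dots> \<le> (\<Sum>i<R. card (adm_vertices n t i) * (2 * d * h * (h + 1) + c))"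
    using ring_traffic_le[OF feas] by (intro sum_mono) auto
  also have "\<dots> = cost n R t * (2 * d * h * (h + 1) + c)"
    by (simp add: cost_eq_sum_card_adm_vertices sum_distrib_right)
  finally show ?thesis .
qed

lemma cost_ge_ring_size:
  assumes feas: "feasible n c (\<lambda>_ _. d) R t" and "n \<ge> 2" and "d \<ge> 1"
  shows "n \<le> cost n R t"
proof -
  have "{1..n} \<subseteq> (\<Union>i<R. adm_vertices n t i)"
  proof
    fix j assume j: "j \<in> {1..n}"
    obtain k where k: "k \<in> {1..n}" "k \<noteq> j"
      using \<open>n \<ge> 2\<close> j by (cases "j = 1") (auto intro: that[of 1] that[of 2])
    then have jk: "(min j k, max j k) \<in> pairs n" using j by (auto simp: pairs_def)
    then have "(\<Sum>i<R. t i (min j k) (max j k) False + t i (min j k) (max j k) True) = d"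
      using feas by (auto simp: feasible_def)
    then obtain i where "i < R" "t i (min j k) (max j k) False + t i (min j k) (max j k) True > 0"
      using \<open>d \<ge> 1\<close> by (metis (no_types, lifting) gr0I lessThan_iff not_one_le_zero sum.neutral)
    then have "i < R" "has_adm n t i j"
      using k unfolding has_adm_def by blast+
    then show "j \<in> (\<Union>i<R. adm_vertices n t i)"
      using j by (auto simp: adm_vertices_def)
  qed
  then have "card {1..n} \<le> card (\<Union>i<R. adm_vertices n t i)"
    by (intro card_mono) (auto intro: finite_adm_vertices)
  also have "\<dots> \<le> (\<Sum>i<R. card (adm_vertices n t i))" by (rule card_UN_le) simp
  finally show ?thesis by (simp add: cost_eq_sum_card_adm_vertices)
qed

lemma min_cost_attained:
  assumes "feasible n c D R t"
  obtains R' t' where "feasible n c D R' t'" and "cost n R' t' = min_cost n c D"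
  using LeastI_ex[of "\<lambda>x. \<exists>R t. feasible n c D R t \<and> cost n R t = x"] assms
  unfolding min_cost_def by blast

lemma min_cost_lower_bounds:
  assumes "feasible n c (\<lambda>_ _. d) R t" and "n \<ge> 2" and "d \<ge> 1"
  shows "n \<le> min_cost n c (\<lambda>_ _. d)"
    and "(h + 1) * (d * card (pairs n)) \<le> min_cost n c (\<lambda>_ _. d) * (2 * d * h * (h + 1) + c)"
proof -
  obtain R' t' where "feasible n c (\<lambda>_ _. d) R' t'" "cost n R' t' = min_cost n c (\<lambda>_ _. d)"
    using min_cost_attained[OF assms(1)] .
  then show "n \<le> min_cost n c (\<lambda>_ _. d)"
    and "(h + 1) * (d * card (pairs n)) \<le> min_cost n c (\<lambda>_ _. d) * (2 * d * h * (h + 1) + c)"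
    using cost_ge_ring_size[OF _ assms(2,3)] cost_lower_bound by metis+
qed

section \<open>The parameters of Algorithm A\<close>

lemma fval_ge_1_iff:
  assumes "c \<ge> 1"
  shows "fval c d \<ge> 1 \<longleftrightarrow> 2 * c \<le> d"
proof -
  have "fval c d \<ge> 1 \<longleftrightarrow> real (2 * c) \<le> real d" using assms by (simp add: fval_def field_simps)
  then show ?thesis by (simp only: of_nat_le_iff)
qed

lemma nat_ceiling_fval_bounds:
  assumes "c \<ge> 1" and "2 * c \<le> d"
  defines "Q \<equiv> nat \<lceil>fval c d\<rceil>"
  shows "1 \<le> Q" and "d \<le> 2 * c * Q" and "c * Q \<le> d"
proof -
  have f: "1 \<le> fval c d" using fval_ge_1_iff assms(1,2) by blast
  have cp: "0 < 2 * real c" using assms(1) by simp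
  have fdef: "fval c d = real d / (2 * real c)" by (simp add: fval_def)
  have rQ: "real Q = of_int \<lceil>fval c d\<rceil>" unfolding Q_def using f by simp
  have up: "fval c d \<le> real Q" and low: "real Q - 1 < fval c d"
    unfolding rQ using ceiling_correct[of "fval c d"] by linarith+
  show Q1: "1 \<le> Q" using up f by linarith
  have "real d \<le> real (2 * c * Q)" using up cp unfolding fdef by (simp add: field_simps)
  then show "d \<le> 2 * c * Q" by (simp only: of_nat_le_iff)
  have "(real Q - 1) * (2 * real c) < real d" using low cp unfolding fdef by (simp add: field_simps)
  then have "real (2 * c * (Q - 1)) < real d" using Q1 by (simp add: of_nat_diff mult_ac)
  then have lt: "2 * c * (Q - 1) < d" by (simp only: of_nat_less_iff)
  have "2 * c * Q = 2 * c * (Q - 1) + 2 * c" using Q1 by (cases Q) (auto simp: algebra_simps)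
  then show "c * Q \<le> d" using lt assms(2) by linarith
qed

lemma nat_floor_sqrt_bounds:
  fixes a b :: nat
  assumes "b \<ge> 1"
  defines "s \<equiv> nat \<lfloor>sqrt (real a / real b)\<rfloor>"
  shows "b * (s * s) \<le> a" and "a < b * ((s + 1) * (s + 1))"
proof -
  let ?x = "real a / real b"
  have rs: "real s = of_int \<lfloor>sqrt ?x\<rfloor>" unfolding s_def by simp
  have low: "real s \<le> sqrt ?x" and up: "sqrt ?x < real s + 1"
    unfolding rs using floor_correct[of "sqrt ?x"] by linarith+
  have sq: "sqrt ?x * sqrt ?x = ?x" by simp
  have "real s * real s \<le> ?x" using mult_mono[OF low low] sq by simp
  then have "real (b * (s * s)) \<le> real a" using assms(1) by (simp add: field_simps)
  then show "b * (s * s) \<le> a" by (simp only: of_nat_le_iff)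
  have "?x < (real s + 1) * (real s + 1)"
    using mult_strict_mono[OF up up] sq by simp
  then have "real a < real (b * ((s + 1) * (s + 1)))" using assms(1) by (simp add: field_simps)
  then show "a < b * ((s + 1) * (s + 1))" by (simp only: of_nat_less_iff)
qed

lemma blocksize_sqrt:
  assumes "c \<ge> 1" and "d \<ge> 1"
  shows "blocksize n c d =
    (let s = nat \<lfloor>sqrt (real (4 * c) / real d)\<rfloor> in if s < 2 then 2 else if s > n then n else s)"
proof -
  have "2 / fval c d = real (4 * c) / real d" using assms by (simp add: fval_def field_simps)
  then show ?thesis by (simp add: blocksize_def)
qed

lemma blocksize_range: "n \<ge> 2 \<Longrightarrow> 2 \<le> blocksize n c d \<and> blocksize n c d \<le> n"
  by (auto simp: blocksize_def Let_def)

lemma blocksize_small: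
  assumes "c \<ge> 1" and "d \<ge> 1"
  shows "blocksize n c d = 2 \<or> d * (blocksize n c d * blocksize n c d) \<le> 4 * c"
proof -
  define s where "s = nat \<lfloor>sqrt (real (4 * c) / real d)\<rfloor>"
  have "blocksize n c d \<le> s \<or> blocksize n c d = 2"
    using blocksize_sqrt[OF assms, of n] by (auto simp: s_def Let_def)
  moreover have "d * (s * s) \<le> 4 * c"
    using nat_floor_sqrt_bounds(1)[OF assms(2)] unfolding s_def .
  moreover have "d * (blocksize n c d * blocksize n c d) \<le> d * (s * s)" if "blocksize n c d \<le> s"
    using that by (intro mult_le_mono2 mult_le_mono)
  ultimately show ?thesis by linarith
qed

lemma blocksize_large:
  assumes "c \<ge> 1" and "d \<ge> 1" and "blocksize n c d < n"
  shows "4 * c < d * ((blocksize n c d + 1) * (blocksize n c d + 1))"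
proof -
  define s where "s = nat \<lfloor>sqrt (real (4 * c) / real d)\<rfloor>"
  have "s \<le> blocksize n c d"
    using blocksize_sqrt[OF assms(1,2), of n] assms(3)
    by (auto simp: s_def Let_def split: if_splits)
  then have "d * ((s + 1) * (s + 1)) \<le> d * ((blocksize n c d + 1) * (blocksize n c d + 1))"
    by (intro mult_le_mono2 mult_le_mono) auto
  moreover have "4 * c < d * ((s + 1) * (s + 1))"
    using nat_floor_sqrt_bounds(2)[OF assms(2)] unfolding s_def .
  ultimately show ?thesis by linarith
qed

lemma nat_ceiling_div_bounds:
  fixes n \<mu> :: nat
  assumes "\<mu> \<ge> 1"
  defines "q \<equiv> nat \<lceil>real n / real \<mu>\<rceil>"
  shows "n \<le> \<mu> * q" and "\<mu> * q < n + \<mu>" and "2 * \<mu> \<le> n \<Longrightarrow> 2 \<le> q"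
proof -
  let ?x = "real n / real \<mu>"
  have rq: "real q = of_int \<lceil>?x\<rceil>" unfolding q_def by simp
  have up: "?x \<le> real q" and low: "real q - 1 < ?x"
    unfolding rq using ceiling_correct[of ?x] by linarith+
  have mpos: "real \<mu> > 0" using assms(1) by simp
  have "real n \<le> real \<mu> * real q" using up mpos by (simp add: field_simps)
  then show "n \<le> \<mu> * q" by (simp only: of_nat_mult[symmetric] of_nat_le_iff)
  have "real \<mu> * real q < real n + real \<mu>" using low mpos by (simp add: field_simps)
  then show "\<mu> * q < n + \<mu>"
    by (simp only: of_nat_mult[symmetric] of_nat_add[symmetric] of_nat_less_iff)
  assume "2 * \<mu> \<le> n"
  then have "2 \<le> ?x" using mpos by (simp add: field_simps)
  then show "2 \<le> q" using up by linarith
qed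

section \<open>Dedicated rings\<close>

lemma algA_large_feasible_cost:
  assumes "algA_large n c d R t"
  shows "feasible n c (\<lambda>_ _. d) R t" and "cost n R t \<le> 2 * (nat \<lceil>fval c d\<rceil> * card (pairs n))"
proof -
  obtain g where g: "\<forall>i<R. g i \<in> pairs n"
    and fibres: "\<forall>p\<in>pairs n. card {i. i < R \<and> g i = p} = nat \<lceil>fval c d\<rceil>"
    and only: "\<forall>i<R. \<forall>p\<in>pairs n. p \<noteq> g i \<longrightarrow>
                 t i (fst p) (snd p) False = 0 \<and> t i (fst p) (snd p) True = 0"
    and feas: "feasible n c (\<lambda>_ _. d) R t"
    using assms unfolding algA_large_def by blast
  show "feasible n c (\<lambda>_ _. d) R t" by (rule feas)
  have "R = card {..<R}" by simp
  also have "{..<R} = (\<Union>p\<in>pairs n. {i. i < R \<and> g i = p})" using g by auto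
  also have "card \<dots> = (\<Sum>p\<in>pairs n. card {i. i < R \<and> g i = p})"
    by (rule card_UN_disjoint) (auto simp: finite_pairs)
  also have "\<dots> = nat \<lceil>fval c d\<rceil> * card (pairs n)" using fibres by simp
  finally have R: "R = nat \<lceil>fval c d\<rceil> * card (pairs n)" .
  have "cost n R t \<le> R * 2"
  proof (rule cost_le_mult_block_size[where B = "\<lambda>i. {fst (g i), snd (g i)}"])
    fix i j k assume "i < R" "(j, k) \<in> pairs n"
      and "\<not> (j \<in> {fst (g i), snd (g i)} \<and> k \<in> {fst (g i), snd (g i)})"
    then have "(j, k) \<noteq> g i" by (metis fst_conv insert_iff snd_conv)
    then show "t i j k False = 0 \<and> t i j k True = 0"
      using only[rule_format, OF \<open>i < R\<close> \<open>(j, k) \<in> pairs n\<close>] by simp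
  qed (auto simp: card_insert_if)
  then show "cost n R t \<le> 2 * (nat \<lceil>fval c d\<rceil> * card (pairs n))" using R by simp
qed

lemma algA_large_cost_le:
  assumes "c \<ge> 1" and "2 * c \<le> d" and "algA_large n c d R t"
    and lower: "d * card (pairs n) \<le> X * c"
  shows "cost n R t \<le> 2 * X"
proof -
  let ?Q = "nat \<lceil>fval c d\<rceil>"
  have "c * (?Q * card (pairs n)) \<le> d * card (pairs n)"
    using nat_ceiling_fval_bounds(3)[OF assms(1,2)] by (simp add: mult.assoc[symmetric])
  also have "\<dots> \<le> c * X" using lower by (simp add: mult.commute)
  finally have "?Q * card (pairs n) \<le> X" using assms(1) by simp
  then show ?thesis using algA_large_feasible_cost(2)[OF assms(3)] by linarith
qed

lemma bounded_parts_exist: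
  fixes d b Q :: nat
  assumes "d \<le> b * Q"
  shows "\<exists>a. (\<Sum>r<Q. a r) = d \<and> (\<forall>r. a r \<le> b)"
  using assms
proof (induction Q arbitrary: d)
  case 0
  then show ?case by (intro exI[of _ "\<lambda>_. 0"]) simp
next
  case (Suc Q)
  obtain a where a: "(\<Sum>r<Q. a r) = d - min b d" "\<forall>r. a r \<le> b"
    using Suc.IH[of "d - min b d"] Suc.prems by fastforce
  show ?case
    by (intro exI[of _ "a(Q := min b d)"]) (use a in auto)
qed

lemma lessThan_mult_div_fibre:
  fixes Q P m :: nat
  assumes "1 \<le> Q" and "m < P"
  shows "{i. i < Q * P \<and> i div Q = m} = {m * Q..<m * Q + Q}"
proof (intro set_eqI iffI)
  fix i assume "i \<in> {i. i < Q * P \<and> i div Q = m}"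
  then have "i = m * Q + i mod Q" using div_mult_mod_eq[of i Q] by simp
  moreover have "i mod Q < Q" using assms(1) by simp
  ultimately show "i \<in> {m * Q..<m * Q + Q}" by simp
next
  fix i assume i: "i \<in> {m * Q..<m * Q + Q}"
  then have "i div Q = m" using assms(1) by (intro div_nat_eqI) (auto simp: algebra_simps)
  moreover have "m * Q + Q \<le> Q * P"
    using assms(2) mult_le_mono1[of "Suc m" P Q] by (simp add: mult.commute)
  ultimately show "i \<in> {i. i < Q * P \<and> i div Q = m}" using i by simp
qed

lemma sum_lessThan_mult_div:
  fixes f :: "nat \<Rightarrow> 'a :: comm_monoid_add"
  assumes "1 \<le> Q" and "m < P"
  shows "(\<Sum>i<Q * P. if i div Q = m then f (i mod Q) else 0) = (\<Sum>r<Q. f r)"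
proof -
  have "(\<Sum>i<Q * P. if i div Q = m then f (i mod Q) else 0)
      = (\<Sum>i\<in>{i. i < Q * P \<and> i div Q = m}. f (i mod Q))"
    by (simp add: sum.If_cases Collect_conj_eq lessThan_def)
  also have "\<dots> = (\<Sum>i\<in>{m * Q..<m * Q + Q}. f (i mod Q))"
    by (simp only: lessThan_mult_div_fibre[OF assms])
  also have "\<dots> = (\<Sum>r<Q. f r)"
    using sum.shift_bounds_nat_ivl[of "\<lambda>i. f (i mod Q)" 0 "m * Q" Q]
    by (simp add: add.commute atLeast0LessThan)
  finally show ?thesis .
qed

lemma load_single_pair_le:
  assumes "(j, k) \<in> pairs n"
    and "\<And>p. p \<in> pairs n \<Longrightarrow> p \<noteq> (j, k) \<Longrightarrow>
      t i (fst p) (snd p) False = 0 \<and> t i (fst p) (snd p) True = 0"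
    and "t i j k False \<le> c" and "t i j k True \<le> c"
  shows "load n t i e \<le> c"
proof -
  let ?on = "\<lambda>j k. (if e \<in> arc_edges n j k False then t i j k False else 0)
      + (if e \<in> arc_edges n j k True then t i j k True else 0)"
  have "(case p of (a, b) \<Rightarrow> ?on a b) = (if p = (j, k) then ?on j k else 0)" if "p \<in> pairs n" for p
    using assms(2)[OF that] by (cases p) auto
  then have "load n t i e = (\<Sum>p\<in>pairs n. if p = (j, k) then ?on j k else 0)"
    unfolding load_def by (rule sum.cong[OF refl])
  also have "\<dots> = ?on j k" using assms(1) finite_pairs by simp
  also have "\<dots> \<le> c" using assms(3,4) by (auto simp: arc_edges_def)
  finally show ?thesis .
qed

lemma replicated_enumeration_exists:
  assumes "finite S" and "1 \<le> Q"
  obtains g :: "nat \<Rightarrow> 'a" and R where "\<And>i. i < R \<Longrightarrow> g i \<in> S"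
    and "\<And>p. p \<in> S \<Longrightarrow> card {i. i < R \<and> g i = p} = Q"
    and "\<And>p (f :: nat \<Rightarrow> nat). p \<in> S \<Longrightarrow> (\<Sum>i<R. if g i = p then f (i mod Q) else 0) = (\<Sum>r<Q. f r)"
proof -
  obtain ps where ps: "set ps = S" "distinct ps" using finite_distinct_list[OF assms(1)] by blast
  define P where "P = length ps"
  define g where "g i = ps ! (i div Q)" for i
  have div_less: "i div Q < P" if "i < Q * P" for i
    using that by (simp add: less_mult_imp_div_less mult.commute)
  have g_eq: "g i = ps ! m \<longleftrightarrow> i div Q = m" if "i < Q * P" "m < P" for i m
    unfolding g_def using div_less[OF that(1)] that(2) ps(2) P_def
    by (simp add: nth_eq_iff_index_eq)
  have index: "\<exists>m<P. p = ps ! m" if "p \<in> S" for p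
    using that ps(1) unfolding P_def by (metis in_set_conv_nth)
  show ?thesis
  proof (rule that[where g = g and R = "Q * P"])
    show "g i \<in> S" if "i < Q * P" for i
      unfolding g_def using nth_mem[of "i div Q" ps] div_less[OF that] ps(1) P_def by simp
    fix p assume "p \<in> S"
    then obtain m where m: "m < P" "p = ps ! m" using index by blast
    then have "{i. i < Q * P \<and> g i = p} = {i. i < Q * P \<and> i div Q = m}" using g_eq by auto
    then show "card {i. i < Q * P \<and> g i = p} = Q"
      using lessThan_mult_div_fibre[OF assms(2) m(1)] by simp
    fix f :: "nat \<Rightarrow> nat"
    have "(\<Sum>i<Q * P. if g i = p then f (i mod Q) else 0)
        = (\<Sum>i<Q * P. if i div Q = m then f (i mod Q) else 0)"
      using g_eq m by (intro sum.cong) auto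
    then show "(\<Sum>i<Q * P. if g i = p then f (i mod Q) else 0) = (\<Sum>r<Q. f r)"
      using sum_lessThan_mult_div[OF assms(2) m(1), of f] by simp
  qed
qed

lemma algA_large_exists:
  assumes "c \<ge> 1" and "2 * c \<le> d"
  shows "\<exists>R t. algA_large n c d R t"
proof -
  define Q where "Q = nat \<lceil>fval c d\<rceil>"
  have Q: "1 \<le> Q" "d \<le> 2 * c * Q" using nat_ceiling_fval_bounds[OF assms] unfolding Q_def by auto
  obtain amt where amt: "(\<Sum>r<Q. amt r) = d" "\<And>r. amt r \<le> 2 * c"
    using bounded_parts_exist[of d "2 * c" Q] Q(2) by auto
  obtain R g where g: "\<And>i. i < R \<Longrightarrow> g i \<in> pairs n"
    and fibres: "\<And>p. p \<in> pairs n \<Longrightarrow> card {i. i < R \<and> g i = p} = Q"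
    and sums: "\<And>p (f :: nat \<Rightarrow> nat). p \<in> pairs n \<Longrightarrow>
      (\<Sum>i<R. if g i = p then f (i mod Q) else 0) = (\<Sum>r<Q. f r)"
    by (rule replicated_enumeration_exists[OF finite_pairs[of n] Q(1)]) (rule that)
  define t where "t i j k b = (if (j, k) = g i
      then (if b then amt (i mod Q) - amt (i mod Q) div 2 else amt (i mod Q) div 2) else 0)"
    for i j k b
  have "t i j k False + t i j k True = (if g i = (j, k) then amt (i mod Q) else 0)" for i j k
    by (auto simp: t_def)
  then have "(\<Sum>i<R. t i j k False + t i j k True) = d" if "(j, k) \<in> pairs n" for j k
    using sums[OF that, of amt] amt(1) by simp
  moreover have "load n t i e \<le> c" if "i < R" for i e
    using g[OF that] amt(2)[of "i mod Q"]
    by (intro load_single_pair_le[where j = "fst (g i)" and k = "snd (g i)"]) (auto simp: t_def)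
  ultimately have "algA_large n c d R t"
    unfolding algA_large_def Q_def[symmetric] feasible_def
    using g fibres by (intro exI[of _ g]) (auto simp: t_def)
  then show ?thesis by blast
qed

section \<open>First-fit routing on blocks\<close>

lemma split_ok_sum: "split_ok n d j k a b \<Longrightarrow> a + b = d"
  unfolding split_ok_def by (cases "k - j < n - (k - j)"; cases "n - (k - j) < k - j") auto

lemma split_ok_by_half_length:
  assumes "j < k" and "k \<le> n"
  shows "split_ok n d j k (if 2 * (k - j) \<le> n then (d + 1) div 2 else d div 2)
                          (if 2 * (k - j) \<le> n then d div 2 else (d + 1) div 2)"
  using assms unfolding split_ok_def by auto

(* The edges that an arc loaded with ceil (d / 2) units under split_ok may pass. *)
definition on_short_arc :: "nat \<Rightarrow> nat \<Rightarrow> nat \<Rightarrow> nat \<Rightarrow> bool" where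
  "on_short_arc n j k e \<longleftrightarrow>
     (e \<in> {j..<k} \<and> 2 * (k - j) \<le> n) \<or> (e \<notin> {j..<k} \<and> n \<le> 2 * (k - j))"

lemma split_ok_edge_traffic_le:
  assumes "split_ok n d j k a b" and "j < k" and "k \<le> n"
  shows "(if e \<in> arc_edges n j k False then a else 0) + (if e \<in> arc_edges n j k True then b else 0)
           \<le> d div 2 + (if on_short_arc n j k e then d mod 2 else 0)"
proof -
  have half: "(d + 1) div 2 = d div 2 + d mod 2" by presburger
  consider "2 * (k - j) < n" | "n < 2 * (k - j)" | "2 * (k - j) = n" by linarith
  then have "(2 * (k - j) \<le> n \<longrightarrow> a \<le> d div 2 + d mod 2) \<and> (2 * (k - j) > n \<longrightarrow> a = d div 2) \<and>
             (n \<le> 2 * (k - j) \<longrightarrow> b \<le> d div 2 + d mod 2) \<and> (2 * (k - j) < n \<longrightarrow> b = d div 2)"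
    using assms unfolding split_ok_def half by cases auto
  then show ?thesis by (auto simp: arc_edges_def on_short_arc_def)
qed

(* Position of x on the ring read clockwise from vertex e + 1, the far end of edge e. *)
definition cw_offset :: "nat \<Rightarrow> nat \<Rightarrow> nat \<Rightarrow> nat" where
  "cw_offset n e x = (if e < x then x - e - 1 else x + n - e - 1)"

lemma on_short_arc_separates:
  assumes "1 \<le> j" "j < k" "k \<le> n" "e \<in> {1..n}" "on_short_arc n j k e"
  shows "if e \<in> {j..<k}
         then 2 * cw_offset n e k + 2 \<le> n \<and> \<not> 2 * cw_offset n e j + 2 \<le> n
         else 2 * cw_offset n e j + 2 \<le> n \<and> \<not> 2 * cw_offset n e k + 2 \<le> n"
proof -
  have kj: "(k - j) + j = k" using assms(2) by simp
  have e: "1 \<le> e" "e \<le> n" using assms(4) by auto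
  show ?thesis
  proof (cases "e \<in> {j..<k}")
    case True
    then have "j \<le> e" "e < k" "2 * (k - j) \<le> n" using assms(5) by (auto simp: on_short_arc_def)
    moreover have "cw_offset n e k + e + 1 = k" "cw_offset n e j + e + 1 = j + n"
      using True e assms(3) by (auto simp: cw_offset_def)
    ultimately show ?thesis using True kj by simp linarith
  next
    case False
    then have short: "n \<le> 2 * (k - j)" using assms(5) unfolding on_short_arc_def by blast
    consider "e < j" | "k \<le> e" using False by force
    then show ?thesis
    proof cases
      case 1
      then have "cw_offset n e k + e + 1 = k" "cw_offset n e j + e + 1 = j"
        using assms(2) by (auto simp: cw_offset_def)
      then show ?thesis using False 1 short kj assms(1,3) by simp linarith
    next
      case 2
      then have "cw_offset n e k + e + 1 = k + n" "cw_offset n e j + e + 1 = j + n"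
        using assms(1,2) e by (auto simp: cw_offset_def)
      then show ?thesis using False 2 short kj e assms(1,3) by simp linarith
    qed
  qed
qed

lemma four_mult_diff_le_square: "4 * (a * (m - a)) \<le> m * (m :: nat)"
proof (cases "a \<le> m")
  case True
  then obtain b where m: "m = a + b" using le_Suc_ex by blast
  have "4 * (int a * int b) \<le> (int a + int b) * (int a + int b)"
    using zero_le_square[of "int a - int b"] by (simp add: algebra_simps)
  then have "int (4 * (a * b)) \<le> int ((a + b) * (a + b))" by simp
  then show ?thesis unfolding m by (simp only: of_nat_le_iff) simp
qed simp

lemma card_pairs_on_short_arc_le:
  assumes "B \<subseteq> {1..n}" and "e \<in> {1..n}"
  shows "4 * card {(j, k)\<in>pairs n. j \<in> B \<and> k \<in> B \<and> on_short_arc n j k e} \<le> card B * card B"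
proof -
  let ?H = "{x. 2 * cw_offset n e x + 2 \<le> n}"
  let ?G = "{(j, k)\<in>pairs n. j \<in> B \<and> k \<in> B \<and> on_short_arc n j k e}"
  \<comment> \<open>a short arc through e has exactly one endpoint in the half ring ?H ahead of e\<close>
  let ?sep = "\<lambda>(j, k). if e \<in> {j..<k} then (k, j) else (j :: nat, k :: nat)"
  have fB: "finite B" using assms(1) finite_subset by blast
  have "inj_on ?sep ?G" by (auto simp: inj_on_def pairs_def split: if_splits)
  moreover have "?sep ` ?G \<subseteq> (B \<inter> ?H) \<times> (B - ?H)"
  proof
    fix x assume "x \<in> ?sep ` ?G"
    then obtain j k where jk: "(j, k) \<in> ?G" "x = ?sep (j, k)" by blast
    then have "1 \<le> j" "j < k" "k \<le> n" "on_short_arc n j k e" "j \<in> B" "k \<in> B"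
      by (auto simp: pairs_def)
    from on_short_arc_separates[OF this(1-3) assms(2) this(4)] this(5,6) jk(2)
    show "x \<in> (B \<inter> ?H) \<times> (B - ?H)" by (auto split: if_splits)
  qed
  ultimately have "card ?G \<le> card ((B \<inter> ?H) \<times> (B - ?H))"
    using fB by (intro card_inj_on_le) auto
  also have "\<dots> = card (B \<inter> ?H) * (card B - card (B \<inter> ?H))"
    using fB by (simp add: card_cartesian_product card_Diff_subset_Int Int_commute)
  finally have "4 * card ?G \<le> 4 * (card (B \<inter> ?H) * (card B - card (B \<inter> ?H)))" by simp
  also have "\<dots> \<le> card B * card B" by (rule four_mult_diff_le_square)
  finally show ?thesis .
qed

lemma block_load_le:
  assumes B: "B \<subseteq> {1..n}" and e: "e \<in> {1..n}"
    and split: "\<And>j k. (j, k) \<in> pairs n \<Longrightarrow>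
      split_ok n d j k (t i j k False) (t i j k True) \<or> t i j k False = 0 \<and> t i j k True = 0"
    and within: "\<And>j k. (j, k) \<in> pairs n \<Longrightarrow> \<not> (j \<in> B \<and> k \<in> B) \<Longrightarrow>
      t i j k False = 0 \<and> t i j k True = 0"
  shows "4 * load n t i e \<le> d div 2 * 2 * (card B * card B - card B) + d mod 2 * (card B * card B)"
proof -
  let ?inB = "\<lambda>j k. j \<in> B \<and> k \<in> B"
  let ?short = "\<lambda>j k. j \<in> B \<and> k \<in> B \<and> on_short_arc n j k e"
  have per_pair: "(if e \<in> arc_edges n j k False then t i j k False else 0)
      + (if e \<in> arc_edges n j k True then t i j k True else 0)
      \<le> d div 2 * (if ?inB j k then 1 else 0) + d mod 2 * (if ?short j k then 1 else 0)"
    if jk: "(j, k) \<in> pairs n" for j k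
  proof (cases "?inB j k \<and> split_ok n d j k (t i j k False) (t i j k True)")
    case True
    with split_ok_edge_traffic_le[of n d j k _ _ e] jk show ?thesis by (auto simp: pairs_def)
  next
    case False
    then have "t i j k False = 0 \<and> t i j k True = 0" using split within jk by blast
    then show ?thesis by simp
  qed
  have "load n t i e \<le> (\<Sum>(j, k)\<in>pairs n.
      d div 2 * (if ?inB j k then 1 else 0) + d mod 2 * (if ?short j k then 1 else 0))"
    unfolding load_def using per_pair by (intro sum_mono) auto
  also have "\<dots> = d div 2 * card {(j, k)\<in>pairs n. ?inB j k}
      + d mod 2 * card {(j, k)\<in>pairs n. ?short j k}"
    unfolding sum_pairs_indicator[symmetric] by (simp add: split_def sum.distrib sum_distrib_left)
  finally have load: "4 * load n t i e \<le> d div 2 * 2 * (2 * card {(j, k)\<in>pairs n. ?inB j k})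
      + d mod 2 * (4 * card {(j, k)\<in>pairs n. ?short j k})" by simp
  have "{(j, k)\<in>pairs n. ?inB j k} = {(j, k). j \<in> B \<and> k \<in> B \<and> j < k}"
    using B by (auto simp: pairs_def)
  then have card_in_block: "2 * card {(j, k)\<in>pairs n. ?inB j k} = card B * card B - card B"
    using card_ordered_pairs[of B] B finite_subset by fastforce
  have card_short: "d mod 2 * (4 * card {(j, k)\<in>pairs n. ?short j k}) \<le> d mod 2 * (card B * card B)"
    by (rule mult_le_mono2[OF card_pairs_on_short_arc_le[OF B e]])
  show ?thesis using load card_short unfolding card_in_block by linarith
qed

lemma block_load_arith:
  fixes c d M :: nat
  assumes "M = 2 \<and> d < 2 * c \<or> d * (M * M) \<le> 4 * c"
  shows "d div 2 * 2 * (M * M - M) + d mod 2 * (M * M) \<le> 4 * c"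
  using assms
proof
  assume "M = 2 \<and> d < 2 * c"
  moreover have "d div 2 + d mod 2 \<le> c" if "d < 2 * c" using that by presburger
  ultimately show ?thesis by simp
next
  assume le: "d * (M * M) \<le> 4 * c"
  have "d div 2 * 2 * (M * M - M) \<le> d div 2 * 2 * (M * M)" by (rule mult_le_mono2) simp
  then have "d div 2 * 2 * (M * M - M) + d mod 2 * (M * M)
      \<le> d div 2 * 2 * (M * M) + d mod 2 * (M * M)" by (rule add_right_mono)
  also have "\<dots> = d * (M * M)" by (simp only: distrib_right[symmetric] div_mult_mod_eq)
  finally show ?thesis using le by simp
qed

lemma sum_at_first_index:
  fixes f :: "nat \<Rightarrow> 'a :: comm_monoid_add"
  assumes f: "\<And>i. i < R \<Longrightarrow> f i = (if P i \<and> \<not> (\<exists>i'<i. P i') then x else 0)"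
    and "i0 < R" and "P i0"
  shows "(\<Sum>i<R. f i) = x"
proof -
  define m where "m = (LEAST i. P i)"
  have m: "P m" "m \<le> i0" using \<open>P i0\<close> unfolding m_def by (auto intro: LeastI Least_le)
  have first: "\<not> (\<exists>i'<m. P i')" unfolding m_def using not_less_Least by blast
  have "f i = (if i = m then x else 0)" if "i < R" for i
  proof (cases "i = m")
    case True
    then show ?thesis using f[OF that] m(1) first by simp
  next
    case False
    have "\<not> (P i \<and> \<not> (\<exists>i'<i. P i'))"
    proof
      assume "P i \<and> \<not> (\<exists>i'<i. P i')"
      moreover from this have "m < i" using False Least_le[of P i] unfolding m_def by auto
      ultimately show False using m(1) by blast
    qed
    then show ?thesis using f[OF that] False by auto
  qed
  then have "(\<Sum>i<R. f i) = (\<Sum>i<R. if i = m then x else 0)" by simp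
  also have "\<dots> = x" using m \<open>i0 < R\<close> by simp
  finally show ?thesis .
qed

definition first_fit_routing :: "nat \<Rightarrow> nat \<Rightarrow> nat set list
    \<Rightarrow> (nat \<Rightarrow> nat \<Rightarrow> nat \<Rightarrow> bool \<Rightarrow> nat) \<Rightarrow> bool" where
  "first_fit_routing n d bs t \<longleftrightarrow>
     (\<forall>i<length bs. \<forall>(j, k)\<in>pairs n.
        if j \<in> bs ! i \<and> k \<in> bs ! i \<and> \<not> (\<exists>i'<i. j \<in> bs ! i' \<and> k \<in> bs ! i')
        then split_ok n d j k (t i j k False) (t i j k True)
        else t i j k False = 0 \<and> t i j k True = 0)"

lemma first_fit_routingD:
  assumes "first_fit_routing n d bs t" and "i < length bs" and "(j, k) \<in> pairs n"
  shows "if j \<in> bs ! i \<and> k \<in> bs ! i \<and> \<not> (\<exists>i'<i. j \<in> bs ! i' \<and> k \<in> bs ! i')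
         then split_ok n d j k (t i j k False) (t i j k True)
         else t i j k False = 0 \<and> t i j k True = 0"
proof -
  from assms(1,2) have "\<forall>(j, k)\<in>pairs n.
        if j \<in> bs ! i \<and> k \<in> bs ! i \<and> \<not> (\<exists>i'<i. j \<in> bs ! i' \<and> k \<in> bs ! i')
        then split_ok n d j k (t i j k False) (t i j k True)
        else t i j k False = 0 \<and> t i j k True = 0"
    unfolding first_fit_routing_def by blast
  from bspec[OF this assms(3)] show ?thesis by simp
qed

lemma first_fit_routed_within:
  assumes "first_fit_routing n d bs t" and "i < length bs" and "(j, k) \<in> pairs n"
    and "\<not> (j \<in> bs ! i \<and> k \<in> bs ! i)"
  shows "t i j k False = 0 \<and> t i j k True = 0"
  using first_fit_routingD[OF assms(1-3)] assms(4) by presburger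

lemma first_fit_split_or_unrouted:
  assumes "first_fit_routing n d bs t" and "i < length bs" and "(j, k) \<in> pairs n"
  shows "split_ok n d j k (t i j k False) (t i j k True) \<or> t i j k False = 0 \<and> t i j k True = 0"
  using first_fit_routingD[OF assms] by presburger

lemma first_fit_demand:
  assumes ff: "first_fit_routing n d bs t" and jk: "(j, k) \<in> pairs n"
    and cover: "\<exists>B\<in>set bs. j \<in> B \<and> k \<in> B"
  shows "(\<Sum>i<length bs. t i j k False + t i j k True) = d"
proof -
  obtain i0 where "i0 < length bs" "j \<in> bs ! i0 \<and> k \<in> bs ! i0"
    using cover by (auto simp: in_set_conv_nth)
  moreover have "t i j k False + t i j k True =
      (if j \<in> bs ! i \<and> k \<in> bs ! i \<and> \<not> (\<exists>i'<i. j \<in> bs ! i' \<and> k \<in> bs ! i') then d else 0)"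
    if "i < length bs" for i
    using first_fit_routingD[OF ff that jk] split_ok_sum by (auto split: if_splits)
  ultimately show ?thesis
    by (intro sum_at_first_index[where P = "\<lambda>i. j \<in> bs ! i \<and> k \<in> bs ! i" and x = d]) auto
qed

lemma first_fit_feasible:
  assumes ff: "first_fit_routing n d bs t"
    and cover: "\<And>j k. (j, k) \<in> pairs n \<Longrightarrow> \<exists>B\<in>set bs. j \<in> B \<and> k \<in> B"
    and blocks: "\<And>B. B \<in> set bs \<Longrightarrow> B \<subseteq> {1..n} \<and> card B = M"
    and M: "M = 2 \<and> d < 2 * c \<or> d * (M * M) \<le> 4 * c"
  shows "feasible n c (\<lambda>_ _. d) (length bs) t"
proof -
  have "4 * load n t i e \<le> 4 * c" if "i < length bs" "e \<in> {1..n}" for i e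
  proof -
    have B: "bs ! i \<subseteq> {1..n}" "card (bs ! i) = M" using blocks[OF nth_mem[OF that(1)]] by auto
    have "4 * load n t i e \<le> d div 2 * 2 * (card (bs ! i) * card (bs ! i) - card (bs ! i))
        + d mod 2 * (card (bs ! i) * card (bs ! i))"
      using first_fit_split_or_unrouted[OF ff that(1)] first_fit_routed_within[OF ff that(1)]
      by (intro block_load_le[OF B(1) that(2)])
    then have "4 * load n t i e \<le> d div 2 * 2 * (M * M - M) + d mod 2 * (M * M)"
      unfolding B(2) .
    also have "\<dots> \<le> 4 * c" by (rule block_load_arith[OF M])
    finally show ?thesis .
  qed
  then show ?thesis
    unfolding feasible_def using first_fit_demand[OF ff] cover by auto
qed

lemma first_fit_cost_le:
  assumes ff: "first_fit_routing n d bs t"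
    and blocks: "\<And>B. B \<in> set bs \<Longrightarrow> finite B \<and> card B \<le> M"
  shows "cost n (length bs) t \<le> length bs * M"
  using first_fit_routed_within[OF ff] blocks
  by (intro cost_le_mult_block_size[where B = "(!) bs"]) auto

lemma first_fit_routing_exists: "\<exists>t. first_fit_routing n d bs t"
proof -
  define first where "first i j k \<longleftrightarrow>
    j \<in> bs ! i \<and> k \<in> bs ! i \<and> \<not> (\<exists>i'<i. j \<in> bs ! i' \<and> k \<in> bs ! i')" for i j k
  define t where "t i j k b =
    (if first i j k
     then (if b then (if 2 * (k - j) \<le> n then d div 2 else (d + 1) div 2)
           else (if 2 * (k - j) \<le> n then (d + 1) div 2 else d div 2))
     else 0)" for i j k b
  have "first_fit_routing n d bs t"
    unfolding first_fit_routing_def first_def[symmetric]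
  proof (intro allI impI ballI, clarify)
    fix i j k assume "(j, k) \<in> pairs n"
    then have "j < k" "k \<le> n" by (auto simp: pairs_def)
    from split_ok_by_half_length[OF this, of d]
    show "if first i j k then split_ok n d j k (t i j k False) (t i j k True)
        else t i j k False = 0 \<and> t i j k True = 0"
      by (cases "first i j k") (simp_all add: t_def)
  qed
  then show ?thesis by blast
qed

section \<open>Block rings\<close>

lemma two_members_cover:
  assumes "2 \<le> card F" and "j \<in> \<Union>F" and "k \<in> \<Union>F"
  shows "\<exists>A\<in>F. \<exists>C\<in>F. A \<noteq> C \<and> j \<in> A \<union> C \<and> k \<in> A \<union> C"
proof -
  obtain A A' where A: "A \<in> F" "j \<in> A" "A' \<in> F" "k \<in> A'" using assms(2,3) by blast
  have "\<not> F \<subseteq> {A}"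
  proof
    assume "F \<subseteq> {A}"
    then have "card F \<le> 1" using card_mono[of "{A}" F] by simp
    then show False using assms(1) by simp
  qed
  then obtain C where C: "C \<in> F" "A \<noteq> C" by blast
  show ?thesis
  proof (cases "A = A'")
    case True
    then show ?thesis using A C by (intro bexI[of _ A] bexI[of _ C]) auto
  next
    case False
    then show ?thesis using A by (intro bexI[of _ A] bexI[of _ A']) auto
  qed
qed

lemma card_pair_images_le:
  assumes "finite F"
  shows "card {blk {A, B} | A B. A \<in> F \<and> B \<in> F \<and> A \<noteq> B} \<le> card F choose 2"
proof -
  let ?two = "{P. P \<subseteq> F \<and> card P = 2}"
  have fin: "finite ?two" by (rule finite_subset[of _ "Pow F"]) (use assms in auto)
  have "{blk {A, B} | A B. A \<in> F \<and> B \<in> F \<and> A \<noteq> B} \<subseteq> blk ` ?two"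
  proof
    fix Y assume "Y \<in> {blk {A, B} | A B. A \<in> F \<and> B \<in> F \<and> A \<noteq> B}"
    then obtain A B where "A \<in> F" "B \<in> F" "A \<noteq> B" "Y = blk {A, B}" by blast
    then show "Y \<in> blk ` ?two" by (intro image_eqI[of _ _ "{A, B}"]) auto
  qed
  then have "card {blk {A, B} | A B. A \<in> F \<and> B \<in> F \<and> A \<noteq> B} \<le> card (blk ` ?two)"
    by (rule card_mono[rotated]) (use fin in simp)
  also have "\<dots> \<le> card ?two" by (rule card_image_le[OF fin])
  also have "\<dots> = card F choose 2" by (rule n_subsets[OF assms])
  finally show ?thesis .
qed

lemma algA_small_blocks:
  assumes "n \<ge> 2" and "algA_small n c d R t"
  obtains bs where "R = length bs" and "distinct bs" and "first_fit_routing n d bs t"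
    and "\<And>B. B \<in> set bs \<Longrightarrow> B \<subseteq> {1..n} \<and> card B = blocksize n c d"
    and "\<And>j k. (j, k) \<in> pairs n \<Longrightarrow> \<exists>B\<in>set bs. j \<in> B \<and> k \<in> B"
    and "length bs \<le> nat \<lceil>real n / real (blocksize n c d div 2)\<rceil> choose 2"
proof -
  define M where "M = blocksize n c d"
  define \<mu> where "\<mu> = M div 2"
  define q where "q = nat \<lceil>real n / real \<mu>\<rceil>"
  have \<mu>: "1 \<le> \<mu>" "2 * \<mu> \<le> n"
    using blocksize_range[OF assms(1), of c d] unfolding M_def \<mu>_def by auto
  obtain F blk bs where fin: "finite F" and card: "card F = q" and cover: "\<Union>F = {1..n}"
    and blk: "\<forall>A\<in>F. \<forall>B\<in>F. A \<noteq> B \<longrightarrow>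
      A \<union> B \<subseteq> blk {A, B} \<and> blk {A, B} \<subseteq> {1..n} \<and> card (blk {A, B}) = M"
    and distinct: "distinct bs"
    and set_bs: "set bs = (if card F = 1 then {{1..n}}
                           else {blk {A, B} | A B. A \<in> F \<and> B \<in> F \<and> A \<noteq> B})"
    and R: "R = length bs"
    and ff: "\<forall>i<R. \<forall>(j, k)\<in>pairs n.
        if j \<in> bs ! i \<and> k \<in> bs ! i \<and> \<not> (\<exists>i'<i. j \<in> bs ! i' \<and> k \<in> bs ! i')
        then split_ok n d j k (t i j k False) (t i j k True)
        else t i j k False = 0 \<and> t i j k True = 0"
    using assms(2)
    unfolding algA_small_def Let_def M_def[symmetric] \<mu>_def[symmetric] q_def[symmetric] by blast
  have "2 \<le> q" using nat_ceiling_div_bounds(3)[OF \<mu>] unfolding q_def .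
  then have set_bs: "set bs = {blk {A, B} | A B. A \<in> F \<and> B \<in> F \<and> A \<noteq> B}"
    using set_bs card by simp
  show ?thesis
  proof
    show "R = length bs" "distinct bs" by (fact R, fact distinct)
    show "first_fit_routing n d bs t" using ff R unfolding first_fit_routing_def by blast
    show "B \<subseteq> {1..n} \<and> card B = blocksize n c d" if "B \<in> set bs" for B
      using that blk unfolding set_bs M_def by blast
    show "\<exists>B\<in>set bs. j \<in> B \<and> k \<in> B" if "(j, k) \<in> pairs n" for j k
    proof -
      have "j \<in> \<Union>F" "k \<in> \<Union>F" using that cover by (auto simp: pairs_def)
      then obtain A C where AC: "A \<in> F" "C \<in> F" "A \<noteq> C" "j \<in> A \<union> C" "k \<in> A \<union> C"
        using two_members_cover[of F j k] \<open>2 \<le> q\<close> card by auto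
      then have "A \<union> C \<subseteq> blk {A, C}" using blk[rule_format, OF AC(1-3)] by blast
      moreover have "blk {A, C} \<in> set bs" unfolding set_bs using AC(1-3) by blast
      ultimately show ?thesis using AC(4,5) by blast
    qed
    show "length bs \<le> nat \<lceil>real n / real (blocksize n c d div 2)\<rceil> choose 2"
      using card_pair_images_le[OF fin, of blk] distinct_card[OF distinct] set_bs card
      unfolding q_def \<mu>_def M_def by simp
  qed
qed

lemma algA_small_feasible:
  assumes "n \<ge> 2" and "c \<ge> 1" and "d \<ge> 1" and "d < 2 * c" and "algA_small n c d R t"
  shows "feasible n c (\<lambda>_ _. d) R t"
proof -
  obtain bs where "R = length bs" "first_fit_routing n d bs t"
    "\<And>B. B \<in> set bs \<Longrightarrow> B \<subseteq> {1..n} \<and> card B = blocksize n c d"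
    "\<And>j k. (j, k) \<in> pairs n \<Longrightarrow> \<exists>B\<in>set bs. j \<in> B \<and> k \<in> B"
    using algA_small_blocks[OF assms(1,5)] by metis
  moreover have "blocksize n c d = 2 \<and> d < 2 * c \<or> d * (blocksize n c d * blocksize n c d) \<le> 4 * c"
    using blocksize_small[OF assms(2,3), of n] assms(4) by blast
  ultimately show ?thesis using first_fit_feasible by metis
qed

lemma block_count_arith:
  fixes \<mu> q n P X :: nat
  assumes \<mu>: "\<mu> \<ge> 1" and n: "2 * \<mu> + 1 \<le> n" and q: "\<mu> * q < n + \<mu>"
    and P: "2 * P + n = n * n" and X: "\<mu> * P \<le> X * (3 * \<mu> * \<mu> + 1)"
  shows "q * (q - 1) * (2 * \<mu> + 1) \<le> 24 * X"
proof -
  have q1: "\<mu> * q \<le> n + \<mu> - 1" and q2: "\<mu> * (q - 1) \<le> n - 1"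
    using q by (simp_all add: diff_mult_distrib2)
  have n\<mu>: "(n + \<mu> - 1) * (2 * \<mu> + 1) \<le> 3 * \<mu> * n"
  proof -
    have "int (n + \<mu> - 1) = int n + int \<mu> - 1" using \<mu> by (simp add: of_nat_diff)
    then have "int ((n + \<mu> - 1) * (2 * \<mu> + 1)) = (int n + int \<mu> - 1) * (2 * int \<mu> + 1)"
      by (simp only: of_nat_mult) simp
    also have "\<dots> = 3 * int \<mu> * int n - (int \<mu> - 1) * (int n - 2 * int \<mu> - 1)"
      by (simp add: algebra_simps)
    also have "\<dots> \<le> int (3 * \<mu> * n)" using \<mu> n by simp
    finally show ?thesis by (simp only: of_nat_le_iff)
  qed
  have "(\<mu> * \<mu>) * (q * (q - 1) * (2 * \<mu> + 1)) = (\<mu> * q) * (\<mu> * (q - 1)) * (2 * \<mu> + 1)"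
    by (simp add: algebra_simps)
  also have "\<dots> \<le> (n + \<mu> - 1) * (n - 1) * (2 * \<mu> + 1)" using q1 q2 by (intro mult_mono) auto
  also have "\<dots> = ((n + \<mu> - 1) * (2 * \<mu> + 1)) * (n - 1)" by (simp only: mult_ac)
  also have "\<dots> \<le> (3 * \<mu> * n) * (n - 1)" using n\<mu> by (rule mult_right_mono) simp
  also have "\<dots> = 3 * \<mu> * (n * (n - 1))" by (simp only: mult.assoc)
  also have "n * (n - 1) = 2 * P" using P by (simp add: diff_mult_distrib2)
  also have "3 * \<mu> * (2 * P) = 6 * (\<mu> * P)" by simp
  also have "\<dots> \<le> 6 * (X * (3 * \<mu> * \<mu> + 1))" using X by simp
  also have "\<dots> \<le> (\<mu> * \<mu>) * (24 * X)" using \<mu> by (simp add: algebra_simps)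
  finally show ?thesis using \<mu> by simp
qed

lemma card_pairs_le_of_lower_bound:
  fixes \<mu> d c X P :: nat
  assumes "1 \<le> \<mu>" and "1 \<le> d" and "c \<le> d * ((\<mu> + 1) * (\<mu> + 1))"
    and "\<mu> * (d * P) \<le> X * (2 * d * (\<mu> - 1) * \<mu> + c)"
  shows "\<mu> * P \<le> X * (3 * \<mu> * \<mu> + 1)"
proof -
  have "d * (\<mu> * P) \<le> X * (2 * d * (\<mu> - 1) * \<mu> + c)" using assms(4) by (simp add: mult_ac)
  also have "\<dots> \<le> X * (d * (3 * \<mu> * \<mu> + 1))"
    using assms(1,3) by (intro mult_le_mono2) (cases \<mu>; simp add: algebra_simps)
  also have "\<dots> = d * (X * (3 * \<mu> * \<mu> + 1))" by (simp only: mult.left_commute)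
  finally show ?thesis using assms(2) by simp
qed

lemma length_distinct_full_subsets_le_1:
  assumes "distinct bs" and "finite S" and "\<And>B. B \<in> set bs \<Longrightarrow> B \<subseteq> S \<and> card B = card S"
  shows "length bs \<le> 1"
proof -
  have "set bs \<subseteq> {S}" using assms(2,3) card_subset_eq by blast
  then show ?thesis using card_mono[of "{S}" "set bs"] distinct_card[OF assms(1)] by simp
qed

lemma algA_small_cost_le:
  assumes n: "n \<ge> 2" and c: "c \<ge> 1" and d: "d \<ge> 1" and run: "algA_small n c d R t"
    and X_ge_n: "n \<le> X"
    and lower: "\<And>h. (h + 1) * (d * card (pairs n)) \<le> X * (2 * d * h * (h + 1) + c)"
  shows "cost n R t \<le> 12 * X"
proof -
  define M where "M = blocksize n c d"
  define \<mu> where "\<mu> = M div 2"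
  define q where "q = nat \<lceil>real n / real \<mu>\<rceil>"
  have M: "2 \<le> M" "M \<le> n" using blocksize_range[OF n] unfolding M_def by auto
  then have \<mu>: "1 \<le> \<mu>" "M \<le> 2 * \<mu> + 1" "2 * \<mu> \<le> M" unfolding \<mu>_def by auto
  obtain bs where R: "R = length bs" and distinct: "distinct bs"
    and ff: "first_fit_routing n d bs t"
    and blocks: "\<And>B. B \<in> set bs \<Longrightarrow> B \<subseteq> {1..n} \<and> card B = M"
    and R_le: "length bs \<le> q choose 2"
    using algA_small_blocks[OF n run] unfolding M_def[symmetric] \<mu>_def[symmetric] q_def[symmetric]
    by metis
  have cost: "cost n R t \<le> R * M"
    unfolding R using blocks finite_subset by (intro first_fit_cost_le[OF ff]) fastforce
  show ?thesis
  proof (cases "M = n")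
    case True
    then have "R \<le> 1"
      unfolding R using blocks
      by (intro length_distinct_full_subsets_le_1[OF distinct, of "{1..n}"]) auto
    then have "R * M \<le> n" using True by (cases R) auto
    then show ?thesis using cost X_ge_n by linarith
  next
    case False
    then have "4 * c < d * ((M + 1) * (M + 1))"
      using blocksize_large[OF c d] M unfolding M_def by simp
    also have "\<dots> \<le> d * ((2 * \<mu> + 2) * (2 * \<mu> + 2))"
      using \<mu> by (intro mult_le_mono2 mult_le_mono) auto
    finally have "c \<le> d * ((\<mu> + 1) * (\<mu> + 1))" by (simp add: algebra_simps)
    then have X: "\<mu> * card (pairs n) \<le> X * (3 * \<mu> * \<mu> + 1)"
      using lower[of "\<mu> - 1"] \<mu>(1) by (intro card_pairs_le_of_lower_bound[OF \<mu>(1) d]) simp_all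
    have "R * M \<le> (q choose 2) * (2 * \<mu> + 1)" unfolding R using R_le \<mu>(2) by (rule mult_le_mono)
    then have "2 * cost n R t \<le> 2 * ((q choose 2) * (2 * \<mu> + 1))" using cost by linarith
    also have "\<dots> = q * (q - 1) * (2 * \<mu> + 1)" by (simp add: choose_two algebra_simps)
    also have "\<dots> \<le> 24 * X"
    proof (rule block_count_arith[OF \<mu>(1) _ _ card_pairs X])
      show "2 * \<mu> + 1 \<le> n" using False M \<mu> by linarith
      show "\<mu> * q < n + \<mu>" unfolding q_def by (rule nat_ceiling_div_bounds(2)[OF \<mu>(1)])
    qed
    finally show ?thesis by simp
  qed
qed

lemma covering_family_exists:
  fixes n \<mu> :: nat
  assumes "1 \<le> \<mu>" and "\<mu> \<le> n"
  shows "\<exists>F. finite F \<and> card F = nat \<lceil>real n / real \<mu>\<rceil> \<and>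
             (\<forall>A\<in>F. A \<subseteq> {1..n} \<and> card A = \<mu>) \<and> \<Union>F = {1..n}"
proof -
  define q where "q = nat \<lceil>real n / real \<mu>\<rceil>"
  have q: "n \<le> \<mu> * q" "\<mu> * q < n + \<mu>"
    using nat_ceiling_div_bounds[OF assms(1)] unfolding q_def by auto
  define a where "a i = min (i * \<mu>) (n - \<mu>)" for i
  define A where "A i = {a i + 1..a i + \<mu>}" for i
  have a_mono: "a i < a i'" if "i < i'" "i' < q" for i i'
  proof -
    have "(i + 1) * \<mu> \<le> (q - 1) * \<mu>" using that by (intro mult_le_mono1) simp
    moreover have "(q - 1) * \<mu> < n" using q(2) that by (cases q) (auto simp: algebra_simps)
    moreover have "i * \<mu> < i' * \<mu>" using that assms(1) by simp
    ultimately show ?thesis unfolding a_def by simp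
  qed
  have "inj_on A {..<q}"
  proof (rule inj_onI)
    fix i i' assume "i \<in> {..<q}" "i' \<in> {..<q}" "A i = A i'"
    then have "a i = a i'"
      using assms(1) unfolding A_def by (metis Icc_eq_Icc add_le_cancel_left add_right_cancel)
    then show "i = i'"
      using a_mono \<open>i \<in> {..<q}\<close> \<open>i' \<in> {..<q}\<close> by (metis lessThan_iff less_irrefl nat_neq_iff)
  qed
  moreover have "A i \<subseteq> {1..n} \<and> card (A i) = \<mu>" for i
    using assms(2) unfolding A_def a_def by auto
  moreover have "{1..n} \<subseteq> (\<Union>i<q. A i)"
  proof
    fix x assume x: "x \<in> {1..n}"
    define i where "i = (x - 1) div \<mu>"
    have "i * \<mu> \<le> x - 1" "x - 1 < i * \<mu> + \<mu>"
      unfolding i_def using assms(1) div_mult_mod_eq[of "x - 1" \<mu>] mod_less_divisor[of \<mu> "x - 1"]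
      by linarith+
    moreover have "i < q"
    proof -
      have "1 \<le> x" "x \<le> n" using x by auto
      then have "x - 1 < \<mu> * q" using q(1) by linarith
      then show ?thesis unfolding i_def by (simp add: less_mult_imp_div_less mult.commute)
    qed
    ultimately show "x \<in> (\<Union>i<q. A i)" using x unfolding A_def a_def by force
  qed
  ultimately show ?thesis unfolding q_def[symmetric]
    by (intro exI[of _ "A ` {..<q}"]) (auto simp: card_image)
qed

lemma enlargement_exists:
  assumes "finite U" and "m \<le> card U"
  obtains blk :: "'a set set \<Rightarrow> 'a set"
  where "\<And>P. \<Union>P \<subseteq> U \<Longrightarrow> card (\<Union>P) \<le> m \<Longrightarrow> \<Union>P \<subseteq> blk P \<and> blk P \<subseteq> U \<and> card (blk P) = m"
proof
  fix P assume "\<Union>P \<subseteq> U" "card (\<Union>P) \<le> m"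
  then have "\<exists>Y. \<Union>P \<subseteq> Y \<and> Y \<subseteq> U \<and> card Y = m"
    using assms by (intro exists_subset_between) auto
  then show "\<Union>P \<subseteq> (SOME Y. \<Union>P \<subseteq> Y \<and> Y \<subseteq> U \<and> card Y = m)
      \<and> (SOME Y. \<Union>P \<subseteq> Y \<and> Y \<subseteq> U \<and> card Y = m) \<subseteq> U
      \<and> card (SOME Y. \<Union>P \<subseteq> Y \<and> Y \<subseteq> U \<and> card Y = m) = m"
    by (rule someI_ex)
qed

lemma algA_small_exists:
  assumes "n \<ge> 2"
  shows "\<exists>R t. algA_small n c d R t"
proof -
  define M where "M = blocksize n c d"
  define \<mu> where "\<mu> = M div 2"
  have M: "2 \<le> M" "M \<le> n" using blocksize_range[OF assms] unfolding M_def by auto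
  then have \<mu>: "1 \<le> \<mu>" "2 * \<mu> \<le> M" unfolding \<mu>_def by auto
  obtain F where fin: "finite F" and card: "card F = nat \<lceil>real n / real \<mu>\<rceil>"
    and F: "\<forall>A\<in>F. A \<subseteq> {1..n} \<and> card A = \<mu>" and cover: "\<Union>F = {1..n}"
    using covering_family_exists[OF \<mu>(1), of n] \<mu> M by auto
  have "card F \<noteq> 1"
    using card nat_ceiling_div_bounds(3)[OF \<mu>(1), of n] \<mu> M by simp
  obtain blk where blk_ok: "\<And>P. \<Union>P \<subseteq> {1..n} \<Longrightarrow> card (\<Union>P) \<le> M \<Longrightarrow>
      \<Union>P \<subseteq> blk P \<and> blk P \<subseteq> {1..n} \<and> card (blk P) = M"
    using enlargement_exists[of "{1..n}" M] M by auto
  have blk: "A \<union> B \<subseteq> blk {A, B} \<and> blk {A, B} \<subseteq> {1..n} \<and> card (blk {A, B}) = M"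
    if "A \<in> F" "B \<in> F" for A B
    using blk_ok[of "{A, B}"] card_Un_le[of A B] F that \<mu>(2) by auto
  define BS where "BS = {blk {A, B} | A B. A \<in> F \<and> B \<in> F \<and> A \<noteq> B}"
  have "BS \<subseteq> (\<lambda>(A, B). blk {A, B}) ` (F \<times> F)" unfolding BS_def by auto
  then have "finite BS" using fin finite_subset by blast
  then obtain bs where bs: "set bs = BS" "distinct bs" using finite_distinct_list by blast
  obtain t where ff: "first_fit_routing n d bs t" using first_fit_routing_exists by blast
  have "algA_small n c d (length bs) t"
    unfolding algA_small_def Let_def M_def[symmetric] \<mu>_def[symmetric]
  proof (intro exI[of _ F] exI[of _ blk] exI[of _ bs] conjI)
    show "\<forall>A\<in>F. \<forall>B\<in>F. A \<noteq> B \<longrightarrow> A \<union> B \<subseteq> blk {A, B} \<and> blk {A, B} \<subseteq> {1..n} \<and> card (blk {A, B}) = M"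
      using blk by blast
    show "set bs = (if card F = 1 then {{1..n}} else {blk {A, B} | A B. A \<in> F \<and> B \<in> F \<and> A \<noteq> B})"
      using \<open>card F \<noteq> 1\<close> bs(1) unfolding BS_def by simp
    show "\<forall>i<length bs. \<forall>(j, k)\<in>pairs n.
        if j \<in> bs ! i \<and> k \<in> bs ! i \<and> \<not> (\<exists>i'<i. j \<in> bs ! i' \<and> k \<in> bs ! i')
        then split_ok n d j k (t i j k False) (t i j k True)
        else t i j k False = 0 \<and> t i j k True = 0"
      using ff unfolding first_fit_routing_def .
  qed (use F fin card cover bs in auto)
  then show ?thesis by blast
qed

section \<open>The approximation ratio\<close>

lemma algA_exists:
  assumes "n \<ge> 2" and "c \<ge> 1"
  shows "\<exists>R t. algA n c d R t"
  using algA_large_exists[OF assms(2)] algA_small_exists[OF assms(1)] fval_ge_1_iff[OF assms(2)]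
  unfolding algA_def by (cases "fval c d \<ge> 1") auto

lemma algA_feasible:
  assumes "n \<ge> 2" and "c \<ge> 1" and "d \<ge> 1" and "algA n c d R t"
  shows "feasible n c (\<lambda>_ _. d) R t"
  using assms algA_large_feasible_cost(1) algA_small_feasible fval_ge_1_iff[OF assms(2)]
  unfolding algA_def by (cases "fval c d \<ge> 1") auto

lemma algA_cost_le_min_cost:
  assumes n: "n \<ge> 2" and c: "c \<ge> 1" and d: "d \<ge> 1" and run: "algA n c d R t"
  shows "cost n R t \<le> 12 * min_cost n c (\<lambda>_ _. d)"
proof -
  let ?m = "min_cost n c (\<lambda>_ _. d)"
  have feas: "feasible n c (\<lambda>_ _. d) R t" by (rule algA_feasible[OF n c d run])
  note lower = min_cost_lower_bounds[OF feas n d]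
  show ?thesis
  proof (cases "fval c d \<ge> 1")
    case True
    have "d * card (pairs n) \<le> ?m * c" using lower(2)[of 0] by simp
    then have "cost n R t \<le> 2 * ?m"
      using algA_large_cost_le[OF c] True run fval_ge_1_iff[OF c] unfolding algA_def by simp
    then show ?thesis by simp
  next
    case False
    then show ?thesis
      using algA_small_cost_le[OF n c d _ lower(1) lower(2)] run unfolding algA_def by simp
  qed
qed

theorem theorem2:
  fixes n c d :: nat
  assumes "n \<ge> 2" and "c \<ge> 1" and "d \<ge> 1"
  shows "(\<exists>R t. algA n c d R t) \<and>
         (\<forall>R t. algA n c d R t \<longrightarrow>
            feasible n c (\<lambda>_ _. d) R t \<and>
            real (cost n R t) \<le> 12 * sqrt 2 * real (min_cost n c (\<lambda>_ _. d)))"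
proof (intro conjI allI impI)
  show "\<exists>R t. algA n c d R t" using algA_exists[OF assms(1,2)] .
  fix R t assume run: "algA n c d R t"
  show "feasible n c (\<lambda>_ _. d) R t" using algA_feasible[OF assms run] .
  have "real (cost n R t) \<le> 12 * real (min_cost n c (\<lambda>_ _. d))"
    using algA_cost_le_min_cost[OF assms run] by linarith
  also have "\<dots> \<le> 12 * sqrt 2 * real (min_cost n c (\<lambda>_ _. d))"
    by (intro mult_right_mono) auto
  finally show "real (cost n R t) \<le> 12 * sqrt 2 * real (min_cost n c (\<lambda>_ _. d))" .
qed

end
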